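(* Let $(A,\succ,\prec)$ be an anti-pre-Novikov algebra and $s\in A\otimes A$, and write $T=T_{s+\tau(s)}$. The following are equivalent: (a) $s+\tau(s)$ is invariant; (b) $T(L_{\succ}^*(x)\zeta)+L_{\star}(x)T(\zeta)=0$ and $T(L_{\circ}^*(x)\zeta)+L_{\odot}(x)T(\zeta)=0$ for all $x\in A,\zeta\in A^*$; (c) $L_{\succ}(x)T(\zeta)+T(L_{\star}^*(x)\zeta)=0$ and $T(L_{\odot}^*(x)\zeta)+L_{\circ}(x)T(\zeta)=0$ for all $x\in A,\zeta\in A^*$; (d) $L_{\star}^*(T(\zeta))\eta=R_{\succ}^*(T(\eta))\zeta$ and $R_{\odot}^*(T(\zeta))\eta=R_{\circ}^*(T(\eta))\zeta$ for all $\zeta,\eta\in A^*$.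
   Context: $A$ is finite-dimensional over a field $k$. An anti-pre-Novikov algebra is $(A,\succ,\prec)$ such that with $x\circ y=x\succ y+x\prec y$: $(x\circ y-y\circ x)\succ z=y\succ(x\succ z)-x\succ(y\succ z)$; $x\prec(y\circ z)=(y\succ x)\prec z-(x\prec y)\prec z-y\succ(x\prec z)$; $(x\circ y)\succ z=-(x\succ z)\prec y$; $(x\prec y)\prec z=(x\prec z)\prec y$; $(x\circ y-y\circ x)\prec z=x\succ(y\circ z)-y\succ(x\circ z)$. Notation: $L_\ast(x)y=x\ast y$, $R_\ast(x)y=y\ast x$ for $\ast\in\{\succ,\prec,\circ\}$; $L_{\star}=L_{\circ}+R_{\circ}$, $L_{\odot}=L_{\succ}+R_{\prec}$, $R_{\odot}=R_{\succ}+L_{\prec}$; for $f:A\to\mathrm{End}(A)$, $\langle f^*(x)\zeta,y\rangle=-\langle\zeta,f(x)y\rangle$; $\tau$ is the flip; for $r\in A\otimes A$, $T_r:A^*\to A$ is $\langle T_r(\zeta),\eta\rangle=\langle r,\zeta\otimes\eta\rangle$. An element $r\in A\otimes A$ is invariant if $(I\otimes L_{\star}(x)-L_{\succ}(x)\otimes I)r=0$ and $(L_{\circ}(x)\otimes I-I\otimes L_{\odot}(x))r=0$ for all $x\in A$. *)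

theory Defs
  imports Main "HOL-Library.Function_Algebras"
begin

text \<open>The finite-dimensional algebra A over the field 'k is represented in
coordinates w.r.t. a basis indexed by the finite type 'n: A = ('n => 'k).
The dual space A* is identified with ('n => 'k) via the pairing below
(coordinates in the dual basis), and A (x) A with ('n => 'n => 'k)
(coefficients w.r.t. e_i (x) e_j). Bilinear products are given by their
structure constants: e_i * e_j = sum_l c i j l e_l.\<close>

definition bvec :: "'n \<Rightarrow> 'n \<Rightarrow> 'k::field" where
  "bvec i = (\<lambda>j. if j = i then 1 else 0)"

definition bilin :: "('n::finite \<Rightarrow> 'n \<Rightarrow> 'n \<Rightarrow> 'k::field) \<Rightarrow> ('n \<Rightarrow> 'k) \<Rightarrow> ('n \<Rightarrow> 'k) \<Rightarrow> ('n \<Rightarrow> 'k)" where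
  "bilin c x y = (\<lambda>l. \<Sum>i\<in>UNIV. \<Sum>j\<in>UNIV. x i * y j * c i j l)"

definition pair :: "('n::finite \<Rightarrow> 'k::field) \<Rightarrow> ('n \<Rightarrow> 'k) \<Rightarrow> 'k" where
  "pair \<zeta> y = (\<Sum>i\<in>UNIV. \<zeta> i * y i)"

text \<open>For a linear operator F on A, dual_op F is determined by
<dual_op F zeta, y> = - <zeta, F y>.\<close>
definition dual_op :: "(('n::finite \<Rightarrow> 'k::field) \<Rightarrow> ('n \<Rightarrow> 'k)) \<Rightarrow> ('n \<Rightarrow> 'k) \<Rightarrow> ('n \<Rightarrow> 'k)" where
  "dual_op F \<zeta> = (\<lambda>i. - pair \<zeta> (F (bvec i)))"

definition tmap :: "(('n::finite \<Rightarrow> 'k::field) \<Rightarrow> ('n \<Rightarrow> 'k)) \<Rightarrow> (('n \<Rightarrow> 'k) \<Rightarrow> ('n \<Rightarrow> 'k))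
    \<Rightarrow> ('n \<Rightarrow> 'n \<Rightarrow> 'k) \<Rightarrow> ('n \<Rightarrow> 'n \<Rightarrow> 'k)" where
  "tmap F G r = (\<lambda>a b. \<Sum>i\<in>UNIV. \<Sum>j\<in>UNIV. r i j * F (bvec i) a * G (bvec j) b)"

definition flip :: "('n \<Rightarrow> 'n \<Rightarrow> 'k) \<Rightarrow> ('n \<Rightarrow> 'n \<Rightarrow> 'k)" where
  "flip r = (\<lambda>i j. r j i)"

text \<open>T_r : A* -> A with <T_r zeta, eta> = <r, zeta (x) eta>.\<close>
definition Tr :: "('n::finite \<Rightarrow> 'n \<Rightarrow> 'k::field) \<Rightarrow> ('n \<Rightarrow> 'k) \<Rightarrow> ('n \<Rightarrow> 'k)" where
  "Tr r \<zeta> = (\<lambda>j. \<Sum>i\<in>UNIV. r i j * \<zeta> i)"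

text \<open>S = structure constants of succ, P = structure constants of prec.\<close>
definition circ :: "('n::finite \<Rightarrow> 'n \<Rightarrow> 'n \<Rightarrow> 'k::field) \<Rightarrow> ('n \<Rightarrow> 'n \<Rightarrow> 'n \<Rightarrow> 'k) \<Rightarrow> ('n \<Rightarrow> 'k) \<Rightarrow> ('n \<Rightarrow> 'k) \<Rightarrow> ('n \<Rightarrow> 'k)" where
  "circ S P x y = bilin S x y + bilin P x y"

definition anti_pre_novikov :: "('n::finite \<Rightarrow> 'n \<Rightarrow> 'n \<Rightarrow> 'k::field) \<Rightarrow> ('n \<Rightarrow> 'n \<Rightarrow> 'n \<Rightarrow> 'k) \<Rightarrow> bool" where
  "anti_pre_novikov S P \<longleftrightarrow> (\<forall>x y z.
     bilin S (circ S P x y - circ S P y x) z = bilin S y (bilin S x z) - bilin S x (bilin S y z)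
   \<and> bilin P x (circ S P y z) = bilin P (bilin S y x) z - bilin P (bilin P x y) z - bilin S y (bilin P x z)
   \<and> bilin S (circ S P x y) z = - bilin P (bilin S x z) y
   \<and> bilin P (bilin P x y) z = bilin P (bilin P x z) y
   \<and> bilin P (circ S P x y - circ S P y x) z = bilin S x (circ S P y z) - bilin S y (circ S P x z))"

definition Lsucc where "Lsucc S x = (\<lambda>y. bilin S x y)"
definition Rsucc where "Rsucc S x = (\<lambda>y. bilin S y x)"
definition Lcirc where "Lcirc S P x = (\<lambda>y. circ S P x y)"
definition Rcirc where "Rcirc S P x = (\<lambda>y. circ S P y x)"
definition Lstar where "Lstar S P x = (\<lambda>y. circ S P x y + circ S P y x)"
definition Lodot where "Lodot S P x = (\<lambda>y. bilin S x y + bilin P y x)"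
definition Rodot where "Rodot S P x = (\<lambda>y. bilin S y x + bilin P x y)"

definition invariant :: "('n::finite \<Rightarrow> 'n \<Rightarrow> 'n \<Rightarrow> 'k::field) \<Rightarrow> ('n \<Rightarrow> 'n \<Rightarrow> 'n \<Rightarrow> 'k) \<Rightarrow> ('n \<Rightarrow> 'n \<Rightarrow> 'k) \<Rightarrow> bool" where
  "invariant S P r \<longleftrightarrow> (\<forall>x.
     tmap id (Lstar S P x) r - tmap (Lsucc S x) id r = 0
   \<and> tmap (Lcirc S P x) id r - tmap id (Lodot S P x) r = 0)"

end

theory Submission imports Defs begin

text \<open>Nothing beyond linear algebra is needed. For a symmetric tensor r, the tensor equation
(F \<otimes> id) r = (id \<otimes> G) r is equivalent to T_r F* + G T_r = 0, because the map
r \<mapsto> T_r is injective; this gives (a) \<Leftrightarrow> (b). Flipping the tensor exchanges F and G,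
which gives (b) \<Leftrightarrow> (c). Finally, pairing (c) with a second functional \<eta> and using
the symmetry \<langle>\<eta>, T_r \<zeta>\<rangle> = \<langle>\<zeta>, T_r \<eta>\<rangle> turns each equation of (c), written as
f(x, T_r \<zeta>) + T_r (g(x, -)* \<zeta>) = 0 for bilinear f and g, into the trilinear identity
\<langle>\<eta>, f(x, T_r \<zeta>)\<rangle> = \<langle>\<zeta>, g(x, T_r \<eta>)\<rangle>; the corresponding equation of (d) is the same
identity read as an equation of functionals in x.\<close>

definition linear_op :: "(('n::finite \<Rightarrow> 'k::field) \<Rightarrow> ('n \<Rightarrow> 'k)) \<Rightarrow> bool" where
  "linear_op F \<longleftrightarrow> (\<forall>y. F y = (\<lambda>a. \<Sum>i\<in>UNIV. y i * F (bvec i) a))"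

lemma bvec_mult [simp]:
  "bvec i j * (a::'k::field) = (if j = i then a else 0)"
  "a * bvec i j = (if j = i then a else 0)"
  by (simp_all add: bvec_def)

lemma bilin_bvec_right: "bilin C x (bvec j) = (\<lambda>a. \<Sum>i\<in>UNIV. x i * C i j a)"
  unfolding bilin_def by (simp add: if_distrib if_distribR cong: if_cong)

lemma bilin_bvec_left: "bilin C (bvec i) y = (\<lambda>a. \<Sum>j\<in>UNIV. y j * C i j a)"
  unfolding bilin_def by (subst sum.swap) (simp add: if_distrib if_distribR cong: if_cong)

lemma linear_op_bilin: "linear_op (bilin C x)"
  unfolding linear_op_def bilin_bvec_right unfolding bilin_def
  by (auto simp: fun_eq_iff sum_distrib_left mult_ac intro: sum.swap)

lemma linear_op_bilin_left: "linear_op (\<lambda>y. bilin C y u)"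
  unfolding linear_op_def bilin_bvec_left unfolding bilin_def
  by (simp add: fun_eq_iff sum_distrib_left mult_ac)

lemma linear_op_add:
  assumes "linear_op F" "linear_op G"
  shows "linear_op (\<lambda>y. F y + G y)"
proof -
  have "F y + G y = (\<lambda>a. \<Sum>i\<in>UNIV. y i * (F (bvec i) a + G (bvec i) a))" for y
    using assms[unfolded linear_op_def, rule_format, of y]
    by (simp add: fun_eq_iff distrib_left sum.distrib)
  then show ?thesis
    unfolding linear_op_def by simp
qed

lemma Tr_bvec: "Tr M (bvec i) = M i"
  unfolding Tr_def by simp

lemma Tr_inject: "Tr M = Tr N \<longleftrightarrow> M = N"
  by (metis Tr_bvec ext)

lemma Tr_diff: "Tr (M - N) \<zeta> = Tr M \<zeta> - Tr N \<zeta>"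
  unfolding Tr_def by (simp add: fun_eq_iff algebra_simps sum_subtractf)

lemma tmap_id_right: "tmap F id r = (\<lambda>a b. \<Sum>i\<in>UNIV. r i b * F (bvec i) a)"
  unfolding tmap_def by (simp add: fun_eq_iff if_distrib if_distribR mult_ac cong: if_cong)

lemma tmap_id_left: "tmap id G r = (\<lambda>a b. \<Sum>j\<in>UNIV. r a j * G (bvec j) b)"
  unfolding tmap_def
  by (subst sum.swap) (simp add: fun_eq_iff if_distrib if_distribR mult_ac cong: if_cong)

lemma Tr_dual_op: "Tr r (dual_op F \<zeta>) = - Tr (tmap F id r) \<zeta>"
  unfolding Tr_def dual_op_def pair_def tmap_id_right
  by (simp add: fun_eq_iff sum_distrib_left sum_distrib_right sum_negf mult_ac)
    (intro allI sum.swap)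

lemma linear_op_apply_Tr:
  assumes "linear_op G"
  shows "G (Tr r \<zeta>) = Tr (tmap id G r) \<zeta>"
proof -
  have "G (Tr r \<zeta>) = (\<lambda>b. \<Sum>j\<in>UNIV. (\<Sum>i\<in>UNIV. r i j * \<zeta> i) * G (bvec j) b)"
    using assms[unfolded linear_op_def, rule_format, of "Tr r \<zeta>"] by (simp add: Tr_def)
  also have "\<dots> = Tr (tmap id G r) \<zeta>"
    unfolding Tr_def tmap_id_left
    by (simp add: fun_eq_iff sum_distrib_left sum_distrib_right mult_ac) (intro allI sum.swap)
  finally show ?thesis .
qed

lemma tmap_eq_iff_Tr_dual_op:
  assumes "linear_op G"
  shows "tmap F id r = tmap id G r \<longleftrightarrow> (\<forall>\<zeta>. Tr r (dual_op F \<zeta>) + G (Tr r \<zeta>) = 0)"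
proof -
  have "Tr r (dual_op F \<zeta>) + G (Tr r \<zeta>) = Tr (tmap id G r - tmap F id r) \<zeta>" for \<zeta>
    by (simp add: Tr_dual_op linear_op_apply_Tr[OF assms] Tr_diff)
  then have "(\<forall>\<zeta>. Tr r (dual_op F \<zeta>) + G (Tr r \<zeta>) = 0) \<longleftrightarrow> Tr (tmap id G r - tmap F id r) = Tr 0"
    by (simp add: fun_eq_iff Tr_def)
  then show ?thesis
    by (auto simp: Tr_inject)
qed

lemma flip_symmetrize: "flip (s + flip s) = s + flip (s :: 'a \<Rightarrow> 'a \<Rightarrow> 'b::ab_semigroup_add)"
  by (auto simp: flip_def fun_eq_iff intro: add.commute)

lemma flip_tmap: "flip (tmap F G r) = tmap G F (flip r)"
  unfolding flip_def tmap_def by (simp add: fun_eq_iff mult_ac) (subst sum.swap, simp add: mult_ac)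

lemma tmap_eq_swap:
  assumes "flip r = r"
  shows "tmap F id r = tmap id G r \<longleftrightarrow> tmap G id r = tmap id F r"
  by (metis assms flip_tmap)

lemma vec_eq_iff_pair: "u = v \<longleftrightarrow> (\<forall>\<eta>. pair \<eta> u = pair \<eta> v)"
proof
  assume "\<forall>\<eta>. pair \<eta> u = pair \<eta> v"
  then have "pair (bvec b) u = pair (bvec b) v" for b
    by blast
  then show "u = v"
    by (simp add: pair_def fun_eq_iff)
qed simp

lemma pair_add: "pair \<eta> (u + v) = pair \<eta> u + pair \<eta> v"
  unfolding pair_def by (simp add: algebra_simps sum.distrib)

lemma pair_zero: "pair \<eta> 0 = 0"
  unfolding pair_def by simp

lemma pair_Tr_sym:
  assumes "flip r = r"
  shows "pair \<eta> (Tr r \<zeta>) = pair \<zeta> (Tr r \<eta>)"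
proof -
  have sym: "r i j = r j i" for i j
    using assms unfolding flip_def by metis
  have "pair \<eta> (Tr r \<zeta>) = (\<Sum>j\<in>UNIV. \<Sum>i\<in>UNIV. \<eta> j * (r i j * \<zeta> i))"
    unfolding pair_def Tr_def by (simp add: sum_distrib_left)
  also have "\<dots> = (\<Sum>i\<in>UNIV. \<Sum>j\<in>UNIV. \<eta> j * (r i j * \<zeta> i))"
    by (rule sum.swap)
  also have "\<dots> = pair \<zeta> (Tr r \<eta>)"
    unfolding pair_def Tr_def by (simp add: sum_distrib_left sym mult_ac)
  finally show ?thesis .
qed

lemma pair_dual_op:
  assumes "linear_op F"
  shows "pair (dual_op F \<zeta>) y = - pair \<zeta> (F y)"
proof -
  have "pair \<zeta> (F y) = (\<Sum>a\<in>UNIV. \<zeta> a * (\<Sum>i\<in>UNIV. y i * F (bvec i) a))"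
    using assms unfolding linear_op_def pair_def by metis
  also have "\<dots> = - pair (dual_op F \<zeta>) y"
    unfolding dual_op_def pair_def
    by (simp add: sum_distrib_left sum_distrib_right sum_negf mult_ac) (rule sum.swap)
  finally show ?thesis
    by simp
qed

lemma dual_op_eq_iff:
  assumes "linear_op F" "linear_op G"
  shows "dual_op F \<zeta> = dual_op G \<eta> \<longleftrightarrow> (\<forall>y. pair \<zeta> (F y) = pair \<eta> (G y))"
proof (intro iffI allI)
  fix y
  assume "dual_op F \<zeta> = dual_op G \<eta>"
  then show "pair \<zeta> (F y) = pair \<eta> (G y)"
    using pair_dual_op[OF assms(1), of \<zeta> y] pair_dual_op[OF assms(2), of \<eta> y] by simp
qed (simp add: dual_op_def)

lemma add_Tr_dual_op_eq_0_iff: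
  assumes "flip r = r" "linear_op F"
  shows "u + Tr r (dual_op F \<zeta>) = 0 \<longleftrightarrow> (\<forall>\<eta>. pair \<eta> u = pair \<zeta> (F (Tr r \<eta>)))"
proof -
  have "pair \<eta> (Tr r (dual_op F \<zeta>)) = - pair \<zeta> (F (Tr r \<eta>))" for \<eta>
    using pair_Tr_sym[OF assms(1), of \<eta> "dual_op F \<zeta>"] pair_dual_op[OF assms(2), of \<zeta> "Tr r \<eta>"]
    by simp
  then show ?thesis
    by (simp add: vec_eq_iff_pair[of _ 0] pair_add pair_zero add_eq_0_iff)
qed

lemma Tr_dual_op_condition_iff_transpose:
  assumes "flip r = r"
    and "\<And>x. linear_op (g x)" and "\<And>u. linear_op (\<lambda>y. g y u)" and "\<And>u. linear_op (\<lambda>y. f y u)"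
  shows "(\<forall>x \<zeta>. f x (Tr r \<zeta>) + Tr r (dual_op (g x) \<zeta>) = 0) \<longleftrightarrow>
         (\<forall>\<zeta> \<eta>. dual_op (\<lambda>y. g y (Tr r \<zeta>)) \<eta> = dual_op (\<lambda>y. f y (Tr r \<eta>)) \<zeta>)"
  unfolding add_Tr_dual_op_eq_0_iff[OF assms(1,2)] dual_op_eq_iff[OF assms(3,4)]
  by metis

lemma Lstar_swap: "Lstar S P u = (\<lambda>y. Lstar S P y u)"
  unfolding Lstar_def by (simp add: add.commute)

lemma Rsucc_eq: "Rsucc S u = (\<lambda>y. Lsucc S y u)"
  unfolding Rsucc_def Lsucc_def ..

lemma Rcirc_eq: "Rcirc S P u = (\<lambda>y. Lcirc S P y u)"
  unfolding Rcirc_def Lcirc_def ..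

lemma Rodot_eq: "Rodot S P u = (\<lambda>y. Lodot S P y u)"
  unfolding Rodot_def Lodot_def ..

lemma linear_op_circ: "linear_op (circ S P x)" "linear_op (\<lambda>y. circ S P y u)"
  unfolding circ_def[abs_def] by (intro linear_op_add linear_op_bilin linear_op_bilin_left)+

lemma linear_op_operators:
  "linear_op (Lsucc S x)" "linear_op (\<lambda>y. Lsucc S y u)"
  "linear_op (Lcirc S P x)" "linear_op (\<lambda>y. Lcirc S P y u)"
  "linear_op (Lstar S P x)" "linear_op (\<lambda>y. Lstar S P y u)"
  "linear_op (Lodot S P x)" "linear_op (\<lambda>y. Lodot S P y u)"
  unfolding Lsucc_def Lcirc_def Lstar_def Lodot_def
  by (intro linear_op_add linear_op_bilin linear_op_bilin_left linear_op_circ)+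

lemma invariant_iff_tmap_eq:
  "invariant S P r \<longleftrightarrow> (\<forall>x. tmap (Lsucc S x) id r = tmap id (Lstar S P x) r
                           \<and> tmap (Lcirc S P x) id r = tmap id (Lodot S P x) r)"
  unfolding invariant_def right_minus_eq by (simp add: eq_commute)

theorem mainTheorem10:
  fixes S P :: "'n::finite \<Rightarrow> 'n \<Rightarrow> 'n \<Rightarrow> 'k::field"
    and s :: "'n \<Rightarrow> 'n \<Rightarrow> 'k"
  assumes "anti_pre_novikov S P"
  defines "T \<equiv> Tr (s + flip s)"
  shows "(invariant S P (s + flip s) \<longleftrightarrow>
           (\<forall>x \<zeta>. T (dual_op (Lsucc S x) \<zeta>) + Lstar S P x (T \<zeta>) = 0
                 \<and> T (dual_op (Lcirc S P x) \<zeta>) + Lodot S P x (T \<zeta>) = 0))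
       \<and> ((\<forall>x \<zeta>. T (dual_op (Lsucc S x) \<zeta>) + Lstar S P x (T \<zeta>) = 0
                 \<and> T (dual_op (Lcirc S P x) \<zeta>) + Lodot S P x (T \<zeta>) = 0) \<longleftrightarrow>
           (\<forall>x \<zeta>. Lsucc S x (T \<zeta>) + T (dual_op (Lstar S P x) \<zeta>) = 0
                 \<and> T (dual_op (Lodot S P x) \<zeta>) + Lcirc S P x (T \<zeta>) = 0))
       \<and> ((\<forall>x \<zeta>. Lsucc S x (T \<zeta>) + T (dual_op (Lstar S P x) \<zeta>) = 0
                 \<and> T (dual_op (Lodot S P x) \<zeta>) + Lcirc S P x (T \<zeta>) = 0) \<longleftrightarrow>
           (\<forall>\<zeta> \<eta>. dual_op (Lstar S P (T \<zeta>)) \<eta> = dual_op (Rsucc S (T \<eta>)) \<zeta>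
                 \<and> dual_op (Rodot S P (T \<zeta>)) \<eta> = dual_op (Rcirc S P (T \<eta>)) \<zeta>))"
proof -
  let ?r = "s + flip s"
  note sym = flip_symmetrize[of s]
  have b_iff_a: "(\<forall>x \<zeta>. T (dual_op (Lsucc S x) \<zeta>) + Lstar S P x (T \<zeta>) = 0
              \<and> T (dual_op (Lcirc S P x) \<zeta>) + Lodot S P x (T \<zeta>) = 0)
           \<longleftrightarrow> invariant S P ?r"
    unfolding invariant_iff_tmap_eq T_def
    by (simp add: tmap_eq_iff_Tr_dual_op linear_op_operators all_conj_distrib)
  have c_iff_a: "(\<forall>x \<zeta>. Lsucc S x (T \<zeta>) + T (dual_op (Lstar S P x) \<zeta>) = 0
              \<and> T (dual_op (Lodot S P x) \<zeta>) + Lcirc S P x (T \<zeta>) = 0)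
           \<longleftrightarrow> invariant S P ?r"
    unfolding invariant_iff_tmap_eq T_def
      tmap_eq_swap[OF sym, of "Lsucc S _"] tmap_eq_swap[OF sym, of "Lcirc S P _"]
    by (simp add: tmap_eq_iff_Tr_dual_op linear_op_operators all_conj_distrib add.commute)
  have c_iff_d: "(\<forall>x \<zeta>. Lsucc S x (T \<zeta>) + T (dual_op (Lstar S P x) \<zeta>) = 0
              \<and> T (dual_op (Lodot S P x) \<zeta>) + Lcirc S P x (T \<zeta>) = 0)
           \<longleftrightarrow> (\<forall>\<zeta> \<eta>. dual_op (Lstar S P (T \<zeta>)) \<eta> = dual_op (Rsucc S (T \<eta>)) \<zeta>
                 \<and> dual_op (Rodot S P (T \<zeta>)) \<eta> = dual_op (Rcirc S P (T \<eta>)) \<zeta>)"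
    unfolding T_def all_conj_distrib Lstar_swap[of S P "Tr ?r _"] Rsucc_eq Rodot_eq Rcirc_eq
    using Tr_dual_op_condition_iff_transpose[OF sym, of "Lstar S P" "Lsucc S"]
      Tr_dual_op_condition_iff_transpose[OF sym, of "Lodot S P" "Lcirc S P"]
    by (simp add: linear_op_operators add.commute)
  show ?thesis
    using b_iff_a c_iff_a c_iff_d by blast
qed

end
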